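(* Let $N\ge2$, $M\ge2$, $d\ge2$. Let $W$ be a random variable with distribution $p(w)$ and let the measurement settings $\boldsymbol{x}\in\{1,\dots,M\}^N$ be chosen with conditional probabilities $p(\boldsymbol{x}|w)$, such that the resulting probabilities $p(\boldsymbol{x})=\sum_w p(w)p(\boldsymbol{x}|w)$ are all equal. Suppose that for each $w$ the outcomes $\boldsymbol{a}\in\mathbb{Z}_d^N$ follow a nonsignalling distribution $\{p(\boldsymbol{a}|\boldsymbol{x},w)\}_{\boldsymbol{a},\boldsymbol{x}}$. Let $p(w|\boldsymbol{x})=p(\boldsymbol{x}|w)p(w)/p(\boldsymbol{x})$, the observed distribution $p(\boldsymbol{a}|\boldsymbol{x})=\sum_wp(w|\boldsymbol{x})p(\boldsymbol{a}|\boldsymbol{x},w)$, and $p(a_k,w|\boldsymbol{x})=p(w|\boldsymbol{x})p(a_k|\boldsymbol{x},w)$ with $p(a_k|\boldsymbol{x},w)$ the marginal of party $k$. Then for every $k=1,\dots,N$ and every $\boldsymbol{x}$, $$\frac12\sum_{a_k,w}\Big|p(a_k,w|\boldsymbol{x})-\tfrac1d\,p(w|\boldsymbol{x})\Big|\le\frac{(d-1)^2+1}{2d}\,\widetilde{Q}_M(\boldsymbol{x})\,I^{N,M,d}_{\mathsf{A}},$$ where $I^{N,M,d}_{\mathsf{A}}$ is evaluated on the observed distribution, $\widetilde{Q}_M(\boldsymbol{x})=\max_w\big[p(\boldsymbol{x}|w)/\widetilde{p}_{\min}(w)\big]$ and $\widetilde{p}_{\min}(w)=\min_{\boldsymbol{x}'}p(\boldsymbol{x}'|w)$,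 the minimum taken over the settings $\boldsymbol{x}'$ appearing in $I^{N,M,d}_{\mathsf{A}}$.
   Context: Notation: $[\Omega]$ is $\Omega$ mod $d$, $\langle[\Omega]\rangle=\sum_{i=0}^{d-1}iP([\Omega]=i)$. For a party $X$ with observables $X_1,\dots,X_M$, $X_{iM+\gamma}:=[X_\gamma+i]$ for $\gamma\in\{1,\dots,M\}$. The Bell expression $I^{N,M,d}_{\mathsf{A}}$ for parties $A^{(1)},\dots,A^{(N)}$: for $N=2$, $I^{2,M,d}=\sum_{\alpha=1}^M\big(\langle[A^{(1)}_\alpha-A^{(2)}_\alpha]\rangle+\langle[A^{(2)}_\alpha-A^{(1)}_{\alpha+1}]\rangle\big)$ (settings appearing: $(\alpha,\alpha)$ and $(\alpha+1\bmod M,\alpha)$); in general $I^{N,M,d}=\frac{1}{M^{N-2}}\sum_{\alpha_1,\dots,\alpha_{N-1}=1}^{M}\big(\langle[A^{(1)}_{\alpha_1}+S]\rangle+\langle[-A^{(1)}_{\alpha_1+1}-S]\rangle\big)$ with $S=\sum_{k=2}^{N-1}(-1)^{k-1}A^{(k)}_{\alpha_{k-1}+\alpha_k-1}+(-1)^{N-1}A^{(N)}_{\alpha_{N-1}}$ (for $N=2$, $S=-A^{(2)}_{\alpha_1}$), i.e. the recursion $I^{N}=\frac1M\sum_{\alpha_{N-1}}I^{N-1}(\alpha_{N-1})\circ A^{(N)}_{\alpha_{N-1}}$ with the last party's index relabelled $\alpha_{N-2}\to\alpha_{N-2}+\alpha_{N-1}-1$ and $A^{(N)}$ inserted with sign opposite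 to $A^{(N-1)}$. Local bound $d-1$, minimal nonsignalling value $0$. Settings "appearing in" $I^{N,M,d}$ are the setting tuples (indices reduced mod $M$) whose joint distributions enter some bracket. *)

theory Defs
  imports Complex_Main "HOL-Library.FuncSet"
begin

definition settings_space :: "nat \<Rightarrow> nat \<Rightarrow> (nat \<Rightarrow> nat) set" where
  "settings_space N M = PiE {1..N} (\<lambda>_. {1..M})"

definition outcomes_space :: "nat \<Rightarrow> nat \<Rightarrow> (nat \<Rightarrow> nat) set" where
  "outcomes_space N d = PiE {1..N} (\<lambda>_. {0..<d})"

text \<open>Observable index j = i*M + gamma (gamma in 1..M) denotes [X_gamma + i].\<close>
definition sidx :: "nat \<Rightarrow> nat \<Rightarrow> nat" where
  "sidx M j = (j - 1) mod M + 1"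

definition sshift :: "nat \<Rightarrow> nat \<Rightarrow> nat" where
  "sshift M j = (j - 1) div M"

definition bracket_setting :: "nat \<Rightarrow> nat \<Rightarrow> (nat \<Rightarrow> nat) \<Rightarrow> (nat \<Rightarrow> nat)" where
  "bracket_setting N M J = (\<lambda>k\<in>{1..N}. sidx M (J k))"

text \<open>The expectation of [sum_k sigma_k A^(k)_(J k)] for a behaviour p (p x a = p(a|x)).\<close>
definition bracket_exp ::
  "nat \<Rightarrow> nat \<Rightarrow> nat \<Rightarrow> ((nat \<Rightarrow> nat) \<Rightarrow> (nat \<Rightarrow> nat) \<Rightarrow> real) \<Rightarrow> (nat \<Rightarrow> nat) \<Rightarrow> (nat \<Rightarrow> int) \<Rightarrow> real" where
  "bracket_exp N M d p J \<sigma> =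
     (\<Sum>a\<in>outcomes_space N d. p (bracket_setting N M J) a *
        of_int ((\<Sum>k=1..N. \<sigma> k * (int (a k) + int (sshift M (J k)))) mod int d))"

text \<open>Indices for the first bracket [A^(1)_{alpha_1} + S] and second bracket [-A^(1)_{alpha_1+1} - S].\<close>
definition J1 :: "nat \<Rightarrow> (nat \<Rightarrow> nat) \<Rightarrow> nat \<Rightarrow> nat" where
  "J1 N \<alpha> k = (if k = 1 then \<alpha> 1 else if k = N then \<alpha> (N - 1) else \<alpha> (k - 1) + \<alpha> k - 1)"

definition J2 :: "nat \<Rightarrow> (nat \<Rightarrow> nat) \<Rightarrow> nat \<Rightarrow> nat" where
  "J2 N \<alpha> k = (if k = 1 then \<alpha> 1 + 1 else J1 N \<alpha> k)"

definition sgn1 :: "nat \<Rightarrow> int" where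
  "sgn1 k = (-1) ^ (k - 1)"

definition alpha_space :: "nat \<Rightarrow> nat \<Rightarrow> (nat \<Rightarrow> nat) set" where
  "alpha_space N M = PiE {1..N - 1} (\<lambda>_. {1..M})"

definition bell_I :: "nat \<Rightarrow> nat \<Rightarrow> nat \<Rightarrow> ((nat \<Rightarrow> nat) \<Rightarrow> (nat \<Rightarrow> nat) \<Rightarrow> real) \<Rightarrow> real" where
  "bell_I N M d p = (1 / real M ^ (N - 2)) *
     (\<Sum>\<alpha>\<in>alpha_space N M.
        bracket_exp N M d p (J1 N \<alpha>) sgn1 + bracket_exp N M d p (J2 N \<alpha>) (\<lambda>k. - sgn1 k))"

definition settings_appearing :: "nat \<Rightarrow> nat \<Rightarrow> (nat \<Rightarrow> nat) set" where
  "settings_appearing N M =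
     (\<lambda>\<alpha>. bracket_setting N M (J1 N \<alpha>)) ` alpha_space N M \<union>
     (\<lambda>\<alpha>. bracket_setting N M (J2 N \<alpha>)) ` alpha_space N M"

definition nonsignalling ::
  "nat \<Rightarrow> nat \<Rightarrow> nat \<Rightarrow> ((nat \<Rightarrow> nat) \<Rightarrow> (nat \<Rightarrow> nat) \<Rightarrow> real) \<Rightarrow> bool" where
  "nonsignalling N M d p \<longleftrightarrow>
     (\<forall>k\<in>{1..N}. \<forall>x\<in>settings_space N M. \<forall>x'\<in>settings_space N M.
        (\<forall>j\<in>{1..N}. j \<noteq> k \<longrightarrow> x j = x' j) \<longrightarrow>
        (\<forall>a\<in>outcomes_space N d.
           (\<Sum>b<d. p x (a(k := b))) = (\<Sum>b<d. p x' (a(k := b)))))"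

definition p_x :: "'w set \<Rightarrow> ('w \<Rightarrow> real) \<Rightarrow> ('w \<Rightarrow> (nat \<Rightarrow> nat) \<Rightarrow> real) \<Rightarrow> (nat \<Rightarrow> nat) \<Rightarrow> real" where
  "p_x W pw pxw x = (\<Sum>w\<in>W. pw w * pxw w x)"

definition p_w_given_x :: "'w set \<Rightarrow> ('w \<Rightarrow> real) \<Rightarrow> ('w \<Rightarrow> (nat \<Rightarrow> nat) \<Rightarrow> real) \<Rightarrow> 'w \<Rightarrow> (nat \<Rightarrow> nat) \<Rightarrow> real" where
  "p_w_given_x W pw pxw w x = pxw w x * pw w / p_x W pw pxw x"

definition observed ::
  "'w set \<Rightarrow> ('w \<Rightarrow> real) \<Rightarrow> ('w \<Rightarrow> (nat \<Rightarrow> nat) \<Rightarrow> real) \<Rightarrow> ('w \<Rightarrow> (nat \<Rightarrow> nat) \<Rightarrow> (nat \<Rightarrow> nat) \<Rightarrow> real)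
     \<Rightarrow> (nat \<Rightarrow> nat) \<Rightarrow> (nat \<Rightarrow> nat) \<Rightarrow> real" where
  "observed W pw pxw P x a = (\<Sum>w\<in>W. p_w_given_x W pw pxw w x * P w x a)"

definition marginal :: "nat \<Rightarrow> nat \<Rightarrow> ((nat \<Rightarrow> nat) \<Rightarrow> (nat \<Rightarrow> nat) \<Rightarrow> real) \<Rightarrow> (nat \<Rightarrow> nat) \<Rightarrow> nat \<Rightarrow> nat \<Rightarrow> real" where
  "marginal N d p x k b = (\<Sum>a\<in>{a\<in>outcomes_space N d. a k = b}. p x a)"

definition p_tilde_min :: "nat \<Rightarrow> nat \<Rightarrow> ('w \<Rightarrow> (nat \<Rightarrow> nat) \<Rightarrow> real) \<Rightarrow> 'w \<Rightarrow> real" where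
  "p_tilde_min N M pxw w = Min ((pxw w) ` settings_appearing N M)"

definition Q_tilde :: "nat \<Rightarrow> nat \<Rightarrow> 'w set \<Rightarrow> ('w \<Rightarrow> (nat \<Rightarrow> nat) \<Rightarrow> real) \<Rightarrow> (nat \<Rightarrow> nat) \<Rightarrow> real" where
  "Q_tilde N M W pxw x = Max ((\<lambda>w. pxw w x / p_tilde_min N M pxw w) ` W)"

end

theory Submission
  imports Defs
begin

text \<open>For a single nonsignalling box, pair the first bracket of each summation tuple \<open>\<alpha>\<close> with
  the second bracket of a relabelled tuple. By subadditivity of \<open>[\<cdot>]\<close> and nonsignalling all
  parties but \<open>k\<close> cancel, and the remaining contributions of party \<open>k\<close> telescope over one
  period of its observable index to \<open>d \<cdot> p(a\<^sub>k = s | x) - 1\<close>. So \<open>d \<cdot> p(a\<^sub>k = s | x) - 1 \<le> I\<close> for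
  every \<open>s\<close>, which bounds the distance of the marginal of party \<open>k\<close> from uniform by
  \<open>(d - 1)/d \<cdot> I\<close>. For the mixture, every bracket of the observed \<open>I\<close> dominates the
  \<open>p\<^sub>m\<^sub>i\<^sub>n(w) p(w) / p(x)\<close>-weighted brackets of the boxes, and these weights are at least
  \<open>p(w|x) / Q\<^sub>M(x)\<close>.\<close>

lemma sum_PiE_insert:
  assumes "x \<notin> S" "finite S" "\<And>i. i \<in> insert x S \<Longrightarrow> finite (T i)"
  shows "(\<Sum>f\<in>PiE (insert x S) T. g f) = (\<Sum>h\<in>PiE S T. \<Sum>y\<in>T x. g (h(x := y)))"
proof -
  have "(\<Sum>f\<in>PiE (insert x S) T. g f) = (\<Sum>p\<in>T x \<times> PiE S T. g ((\<lambda>(y, h). h(x := y)) p))"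
    unfolding PiE_insert_eq by (rule sum.reindex[OF inj_combinator[OF assms(1)], unfolded comp_def])
  also have "\<dots> = (\<Sum>y\<in>T x. \<Sum>h\<in>PiE S T. g (h(x := y)))"
    by (simp add: sum.cartesian_product split_def)
  also have "\<dots> = (\<Sum>h\<in>PiE S T. \<Sum>y\<in>T x. g (h(x := y)))"
    by (rule sum.swap)
  finally show ?thesis .
qed

lemma finite_outcomes_space: "finite (outcomes_space N d)"
  unfolding outcomes_space_def by (rule finite_PiE) auto

lemma finite_alpha_space: "finite (alpha_space N M)"
  unfolding alpha_space_def by (rule finite_PiE) auto

lemma outcomes_space_lessD: "a \<in> outcomes_space N d \<Longrightarrow> k \<in> {1..N} \<Longrightarrow> a k < d"
  unfolding outcomes_space_def by auto

lemma settings_space_fun_upd: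
  "x \<in> settings_space N M \<Longrightarrow> k \<in> {1..N} \<Longrightarrow> v \<in> {1..M} \<Longrightarrow> x(k := v) \<in> settings_space N M"
  unfolding settings_space_def by (auto simp: PiE_iff extensional_def)

lemma settings_space_eqI:
  "x \<in> settings_space N M \<Longrightarrow> y \<in> settings_space N M \<Longrightarrow> (\<And>j. j \<in> {1..N} \<Longrightarrow> x j = y j) \<Longrightarrow> x = y"
  unfolding settings_space_def by (rule PiE_ext)

lemma sum_outcomes_space_split_party:
  assumes "k \<in> {1..N}"
  shows "(\<Sum>a\<in>outcomes_space N d. f a) =
    (\<Sum>h\<in>PiE ({1..N} - {k}) (\<lambda>_. {0..<d}). \<Sum>b<d. f (h(k := b)))"
proof -
  have "outcomes_space N d = PiE (insert k ({1..N} - {k})) (\<lambda>_. {0..<d})"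
    using assms unfolding outcomes_space_def by (simp add: insert_absorb)
  then have "(\<Sum>a\<in>outcomes_space N d. f a) =
      (\<Sum>h\<in>PiE ({1..N} - {k}) (\<lambda>_. {0..<d}). \<Sum>b\<in>{0..<d}. f (h(k := b)))"
    by (simp only:) (rule sum_PiE_insert; simp)
  then show ?thesis
    by (simp only: atLeast0LessThan)
qed

lemma sum_outcomes_space_party:
  assumes "k \<in> {1..N}"
  shows "(\<Sum>a\<in>outcomes_space N d. p x a * F (a k)) = (\<Sum>b<d. F b * marginal N d p x k b)"
proof -
  have img: "(\<lambda>a. a k) ` outcomes_space N d \<subseteq> {..<d}"
    using assms outcomes_space_lessD by blast
  have "(\<Sum>b<d. F b * marginal N d p x k b)
      = (\<Sum>b<d. \<Sum>a\<in>{a\<in>outcomes_space N d. a k = b}. p x a * F (a k))"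
    unfolding marginal_def by (auto simp: sum_distrib_left mult.commute intro!: sum.cong)
  also have "\<dots> = (\<Sum>a\<in>outcomes_space N d. p x a * F (a k))"
    by (rule sum.group[OF finite_outcomes_space _ img]) simp
  finally show ?thesis by simp
qed

lemma sum_marginal:
  "k \<in> {1..N} \<Longrightarrow> (\<Sum>b<d. marginal N d p x k b) = (\<Sum>a\<in>outcomes_space N d. p x a)"
  using sum_outcomes_space_party[of k N p x "\<lambda>_. 1" d] by simp

lemma nonsignalling_sum_eq:
  assumes ns: "nonsignalling N M d p" and d: "d > 0" and k: "k \<in> {1..N}"
    and x: "x \<in> settings_space N M" and x': "x' \<in> settings_space N M"
    and agree: "\<And>j. j \<in> {1..N} \<Longrightarrow> j \<noteq> k \<Longrightarrow> x j = x' j"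
    and g: "\<And>a c. g (a(k := c)) = g a"
  shows "(\<Sum>a\<in>outcomes_space N d. p x a * g a) = (\<Sum>a\<in>outcomes_space N d. p x' a * g a)"
proof -
  have split: "(\<Sum>a\<in>outcomes_space N d. p y a * g a) =
     (\<Sum>h\<in>PiE ({1..N} - {k}) (\<lambda>_. {0..<d}). g h * (\<Sum>b<d. p y (h(k := b))))" for y
    unfolding sum_outcomes_space_split_party[OF k] g by (simp add: sum_distrib_left mult.commute)
  have "(\<Sum>b<d. p x (h(k := b))) = (\<Sum>b<d. p x' (h(k := b)))"
    if h: "h \<in> PiE ({1..N} - {k}) (\<lambda>_. {0..<d})" for h
  proof -
    have "h(k := 0) \<in> outcomes_space N d"
      using h d k unfolding outcomes_space_def by (auto simp: PiE_iff extensional_def)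
    with ns k x x' agree show ?thesis
      unfolding nonsignalling_def by fastforce
  qed
  then show ?thesis
    unfolding split by (intro sum.cong) auto
qed

lemma nonsignalling_party_exp_eq:
  assumes ns: "nonsignalling N M d p" and d: "d > 0" and k: "k \<in> {1..N}"
    and x: "x \<in> settings_space N M" and x': "x' \<in> settings_space N M" and xk: "x k = x' k"
  shows "(\<Sum>a\<in>outcomes_space N d. p x a * F (a k)) = (\<Sum>a\<in>outcomes_space N d. p x' a * F (a k))"
proof -
  let ?E = "\<lambda>y. \<Sum>a\<in>outcomes_space N d. p y a * F (a k)"
  have "?E y = ?E x'"
    if "finite B" "B \<subseteq> {1..N} - {k}" "y \<in> settings_space N M" "\<forall>j\<in>{1..N} - B. y j = x' j" for B y
    using that
  proof (induction B arbitrary: y rule: finite_induct)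
    case empty
    then have "y = x'" by (intro settings_space_eqI[OF _ x']) auto
    then show ?case by simp
  next
    case (insert j B)
    have j: "j \<in> {1..N}" "j \<noteq> k" and jM: "x' j \<in> {1..M}"
      using insert.prems x' unfolding settings_space_def by auto
    have y': "y(j := x' j) \<in> settings_space N M"
      using settings_space_fun_upd[OF insert.prems(2) j(1) jM] .
    have "?E y = ?E (y(j := x' j))"
      by (rule nonsignalling_sum_eq[OF ns d j(1) insert.prems(2) y']) (use j in auto)
    also have "\<dots> = ?E x'"
      by (rule insert.IH[OF _ y']) (use insert.prems in auto)
    finally show ?case .
  qed
  from this[of "{1..N} - {k}" x] x xk show ?thesis by auto
qed

lemma mod_add_le_add_mod: "(0::int) < d \<Longrightarrow> (x + y) mod d \<le> x mod d + y mod d"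
  by (metis mod_add_eq pos_mod_sign zmod_le_nonneg_dividend add_nonneg_nonneg)

lemma mod_diff_one_minus_mod:
  assumes "(0::int) < d"
  shows "(y - 1) mod d - y mod d = (if y mod d = 0 then d - 1 else -1)"
proof -
  have "(y - 1) mod d = (y mod d - 1) mod d" by (metis mod_diff_left_eq)
  moreover have "0 \<le> y mod d" "y mod d < d" using assms by auto
  ultimately show ?thesis
    by (cases "y mod d = 0") (auto simp: mod_pos_pos_trivial zmod_minus1)
qed

lemma diff_mod_eq_0_iff:
  assumes "a < d" "b < d"
  shows "(int a - int b) mod int d = 0 \<longleftrightarrow> a = b"
proof
  assume "(int a - int b) mod int d = 0"
  then have "int d dvd (int a - int b)" by (simp add: mod_eq_0_iff_dvd)
  with assms show "a = b"
    using dvd_imp_le_int[of "int a - int b" "int d"] by (cases "a = b") auto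
qed simp

text \<open>Both brackets are split by subadditivity of \<open>[\<cdot>]\<close> through the common term \<open>[-u - t]\<close>,
  whose expectations at \<open>x\<close> and \<open>x'\<close> agree by nonsignalling.\<close>

lemma chained_brackets_ge:
  assumes ns: "nonsignalling N M d p"
    and p_nonneg: "\<forall>x\<in>settings_space N M. \<forall>a\<in>outcomes_space N d. p x a \<ge> 0"
    and d: "d > 0" and k: "k \<in> {1..N}"
    and x: "x \<in> settings_space N M" and x': "x' \<in> settings_space N M"
    and agree: "\<And>j. j \<in> {1..N} \<Longrightarrow> j \<noteq> k \<Longrightarrow> x j = x' j"
    and u_indep: "\<And>a c. u (a(k := c)) = (u a :: int)"
  shows "(\<Sum>a\<in>outcomes_space N d. p x a * of_int ((z (a k) + u a) mod int d))
       + (\<Sum>a\<in>outcomes_space N d. p x' a * of_int ((- (z' (a k) + u a)) mod int d))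
     \<ge> (\<Sum>a\<in>outcomes_space N d. p x a * of_int ((z (a k) - t) mod int d))
       - (\<Sum>a\<in>outcomes_space N d. p x' a * of_int ((z' (a k) - t) mod int d))"
proof -
  let ?O = "outcomes_space N d"
  define R :: "(nat \<Rightarrow> nat) \<Rightarrow> real" where "R a = of_int ((- u a - t) mod int d)" for a
  have dd: "(0::int) < int d" using d by simp
  have 1: "(\<Sum>a\<in>?O. p x a * (of_int ((z (a k) - t) mod int d) - R a))
      \<le> (\<Sum>a\<in>?O. p x a * of_int ((z (a k) + u a) mod int d))"
  proof (rule sum_mono)
    fix a assume "a \<in> ?O"
    moreover have "(z (a k) - t) mod int d \<le> (z (a k) + u a) mod int d + (- u a - t) mod int d"
      using mod_add_le_add_mod[OF dd, of "z (a k) + u a" "- u a - t"] by simp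
    ultimately show "p x a * (of_int ((z (a k) - t) mod int d) - R a) \<le> p x a * of_int ((z (a k) + u a) mod int d)"
      using p_nonneg x unfolding R_def by (intro mult_left_mono) auto
  qed
  have 2: "(\<Sum>a\<in>?O. p x' a * (R a - of_int ((z' (a k) - t) mod int d)))
      \<le> (\<Sum>a\<in>?O. p x' a * of_int ((- (z' (a k) + u a)) mod int d))"
  proof (rule sum_mono)
    fix a assume "a \<in> ?O"
    moreover have "(- u a - t) mod int d \<le> (- (z' (a k) + u a)) mod int d + (z' (a k) - t) mod int d"
      using mod_add_le_add_mod[OF dd, of "- (z' (a k) + u a)" "z' (a k) - t"] by simp
    ultimately show "p x' a * (R a - of_int ((z' (a k) - t) mod int d)) \<le> p x' a * of_int ((- (z' (a k) + u a)) mod int d)"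
      using p_nonneg x' unfolding R_def by (intro mult_left_mono) auto
  qed
  have 3: "(\<Sum>a\<in>?O. p x a * R a) = (\<Sum>a\<in>?O. p x' a * R a)"
    using nonsignalling_sum_eq[OF ns d k x x' agree, of R] by (simp add: R_def u_indep)
  show ?thesis
    using 1 2 3 by (simp add: sum_subtractf right_diff_distrib)
qed

lemma alpha_space_bounds: "\<alpha> \<in> alpha_space N M \<Longrightarrow> m \<in> {1..N - 1} \<Longrightarrow> 1 \<le> \<alpha> m \<and> \<alpha> m \<le> M"
  unfolding alpha_space_def by auto

lemma alpha_space_ge_1: "\<alpha> \<in> alpha_space N M \<Longrightarrow> 1 \<le> m \<Longrightarrow> m < N \<Longrightarrow> 1 \<le> \<alpha> m"
  using alpha_space_bounds[of \<alpha> N M m] by auto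

lemma J1_ge_1:
  assumes N: "N \<ge> 2" and \<alpha>: "\<alpha> \<in> alpha_space N M" and j: "j \<in> {1..N}"
  shows "J1 N \<alpha> j \<ge> 1"
proof -
  consider "j = 1" | "j = N" | "1 < j" "j < N" using j by fastforce
  then show ?thesis
    using N alpha_space_ge_1[OF \<alpha>, of 1] alpha_space_ge_1[OF \<alpha>, of "N - 1"]
      alpha_space_ge_1[OF \<alpha>, of j] alpha_space_ge_1[OF \<alpha>, of "j - 1"]
    unfolding J1_def by cases force+
qed

lemma J2_ge_1: "N \<ge> 2 \<Longrightarrow> \<alpha> \<in> alpha_space N M \<Longrightarrow> j \<in> {1..N} \<Longrightarrow> J2 N \<alpha> j \<ge> 1"
  using J1_ge_1 unfolding J2_def by auto

lemma sgn1_cases: "sgn1 k = 1 \<or> sgn1 k = -1"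
  unfolding sgn1_def by (simp add: minus_one_power_iff)

lemma sgn1_mult_self: "sgn1 k * sgn1 k = 1"
  using sgn1_cases[of k] by auto

lemma sum_alternating_telescope:
  fixes a :: "nat \<Rightarrow> int"
  assumes "n \<ge> 1"
  shows "(\<Sum>j=1..n. sgn1 j * (a (j - 1) + a j)) = a 0 + sgn1 n * a n"
  using assms
proof (induction n rule: dec_induct)
  case base
  then show ?case by (simp add: sgn1_def)
next
  case (step n)
  have "sgn1 (Suc n) = - sgn1 n"
    using step.hyps unfolding sgn1_def by (cases n) auto
  then show ?case using step by (simp add: algebra_simps)
qed

text \<open>Writing \<open>J1 N \<alpha> j = \<alpha>\<^sub>j\<^sub>-\<^sub>1 + \<alpha>\<^sub>j - 1\<close> with \<open>\<alpha>\<^sub>0 = \<alpha>\<^sub>N = 1\<close>, the alternating sum telescopes.\<close>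

lemma alt_sum_J1:
  assumes N: "N \<ge> 2" and \<alpha>: "\<alpha> \<in> alpha_space N M"
  shows "(\<Sum>j=1..N. sgn1 j * int (J1 N \<alpha> j)) = 1 + sgn1 N - (\<Sum>j=1..N. sgn1 j)"
proof -
  define \<alpha>' where "\<alpha>' m = (if m = 0 \<or> m = N then 1 else int (\<alpha> m))" for m
  have "int (J1 N \<alpha> j) = \<alpha>' (j - 1) + \<alpha>' j - 1" if j: "j \<in> {1..N}" for j
  proof -
    consider "j = 1" | "j = N" | "1 < j" "j < N" using j by fastforce
    then show ?thesis
      using N alpha_space_ge_1[OF \<alpha>, of "j - 1"] alpha_space_ge_1[OF \<alpha>, of j]
      unfolding J1_def \<alpha>'_def by cases (auto simp: of_nat_diff)
  qed
  then have "(\<Sum>j=1..N. sgn1 j * int (J1 N \<alpha> j)) = (\<Sum>j=1..N. sgn1 j * (\<alpha>' (j - 1) + \<alpha>' j) - sgn1 j)"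
    by (intro sum.cong) (simp_all add: right_diff_distrib)
  also have "\<dots> = 1 + sgn1 N - (\<Sum>j=1..N. sgn1 j)"
    using sum_alternating_telescope[of N \<alpha>'] N by (simp add: sum_subtractf \<alpha>'_def)
  finally show ?thesis .
qed

lemma alt_sum_J2:
  assumes "N \<ge> 2"
  shows "(\<Sum>j=1..N. sgn1 j * int (J2 N \<alpha> j)) = (\<Sum>j=1..N. sgn1 j * int (J1 N \<alpha> j)) + 1"
proof -
  have "(\<Sum>j=1..N. sgn1 j * int (J2 N \<alpha> j)) = (\<Sum>j=1..N. sgn1 j * int (J1 N \<alpha> j) + (if j = 1 then 1 else 0))"
    by (intro sum.cong) (auto simp: J2_def J1_def sgn1_def)
  also have "\<dots> = (\<Sum>j=1..N. sgn1 j * int (J1 N \<alpha> j)) + 1"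
    using assms by (simp add: sum.distrib)
  finally show ?thesis .
qed

definition cyc_pred :: "nat \<Rightarrow> nat \<Rightarrow> nat" where
  "cyc_pred M v = (if v = 1 then M else v - 1)"

definition cyc_succ :: "nat \<Rightarrow> nat \<Rightarrow> nat" where
  "cyc_succ M v = (if v = M then 1 else v + 1)"

text \<open>The relabelling of the summation indices that pairs the first bracket of \<open>\<alpha>\<close> with the
  second bracket of \<open>relabel N M k \<alpha>\<close> (see \<open>J2_relabel_cong\<close>).\<close>

definition relabel :: "nat \<Rightarrow> nat \<Rightarrow> nat \<Rightarrow> (nat \<Rightarrow> nat) \<Rightarrow> (nat \<Rightarrow> nat)" where
  "relabel N M k \<alpha> = (\<lambda>j\<in>{1..N - 1}.
     if j < k then (if odd j then cyc_pred M (\<alpha> j) else cyc_succ M (\<alpha> j)) else \<alpha> j)"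

definition relabel_offset :: "nat \<Rightarrow> nat \<Rightarrow> int" where
  "relabel_offset k m = (if m < k then (if odd m then -1 else 1) else 0)"

lemma cyc_pred_in_range: "M \<ge> 1 \<Longrightarrow> v \<in> {1..M} \<Longrightarrow> cyc_pred M v \<in> {1..M}"
  unfolding cyc_pred_def by auto

lemma cyc_succ_in_range: "M \<ge> 1 \<Longrightarrow> v \<in> {1..M} \<Longrightarrow> cyc_succ M v \<in> {1..M}"
  unfolding cyc_succ_def by auto

lemma cyc_succ_pred: "M \<ge> 1 \<Longrightarrow> v \<in> {1..M} \<Longrightarrow> cyc_succ M (cyc_pred M v) = v"
  unfolding cyc_pred_def cyc_succ_def by auto

lemma cyc_pred_succ: "M \<ge> 1 \<Longrightarrow> v \<in> {1..M} \<Longrightarrow> cyc_pred M (cyc_succ M v) = v"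
  unfolding cyc_pred_def cyc_succ_def by auto

lemma inj_on_cyc_pred: "M \<ge> 1 \<Longrightarrow> inj_on (cyc_pred M) {1..M}"
  by (rule inj_on_inverseI[of _ "cyc_succ M"]) (rule cyc_succ_pred)

lemma inj_on_cyc_succ: "M \<ge> 1 \<Longrightarrow> inj_on (cyc_succ M) {1..M}"
  by (rule inj_on_inverseI[of _ "cyc_pred M"]) (rule cyc_pred_succ)

lemma relabel_in_alpha_space: "M \<ge> 1 \<Longrightarrow> \<alpha> \<in> alpha_space N M \<Longrightarrow> relabel N M k \<alpha> \<in> alpha_space N M"
  unfolding alpha_space_def relabel_def using cyc_pred_in_range cyc_succ_in_range
  by (auto simp: PiE_iff)

lemma bij_betw_relabel:
  assumes M: "M \<ge> 1"
  shows "bij_betw (relabel N M k) (alpha_space N M) (alpha_space N M)"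
proof -
  have "inj_on (relabel N M k) (alpha_space N M)"
  proof (rule inj_onI)
    fix \<alpha> \<beta> assume \<alpha>: "\<alpha> \<in> alpha_space N M" and \<beta>: "\<beta> \<in> alpha_space N M"
      and eq: "relabel N M k \<alpha> = relabel N M k \<beta>"
    show "\<alpha> = \<beta>"
    proof (rule PiE_ext[OF \<alpha>[unfolded alpha_space_def] \<beta>[unfolded alpha_space_def]])
      fix j assume j: "j \<in> {1..N - 1}"
      have "relabel N M k \<alpha> j = relabel N M k \<beta> j" using eq by simp
      moreover have "\<alpha> j \<in> {1..M}" "\<beta> j \<in> {1..M}"
        using alpha_space_bounds[OF \<alpha> j] alpha_space_bounds[OF \<beta> j] by auto
      ultimately show "\<alpha> j = \<beta> j"
        using j unfolding relabel_def
        by (auto split: if_splits dest: inj_onD[OF inj_on_cyc_pred[OF M]] inj_onD[OF inj_on_cyc_succ[OF M]])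
    qed
  qed
  moreover have "relabel N M k ` alpha_space N M \<subseteq> alpha_space N M"
    using relabel_in_alpha_space[OF M] by blast
  ultimately show ?thesis
    unfolding bij_betw_def using endo_inj_surj[OF finite_alpha_space] by blast
qed

lemma relabel_cong:
  assumes "M \<ge> 1" "\<alpha> \<in> alpha_space N M" "m \<in> {1..N - 1}"
  shows "int M dvd (int (relabel N M k \<alpha> m) - int (\<alpha> m) - relabel_offset k m)"
  using assms alpha_space_bounds[OF assms(2,3)]
  unfolding relabel_def relabel_offset_def cyc_pred_def cyc_succ_def by (auto simp: of_nat_diff)

lemma relabel_offset_adjacent:
  assumes "j \<ge> 2"
  shows "relabel_offset k (j - 1) + relabel_offset k j = (if j = k then sgn1 k else 0)"
proof -
  consider "j < k" | "j = k" | "j > k" by linarith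
  then show ?thesis
    using assms unfolding relabel_offset_def sgn1_def
    by cases (auto elim: oddE evenE simp: odd_Suc_minus_one)
qed

lemma J2_relabel_cong:
  assumes N: "N \<ge> 2" and M: "M \<ge> 1" and \<alpha>: "\<alpha> \<in> alpha_space N M"
    and k: "k \<in> {1..N}" and j: "j \<in> {1..N}"
  shows "int M dvd (int (J2 N (relabel N M k \<alpha>) j) - int (J1 N \<alpha> j) - (if j = k then sgn1 k else 0))"
proof -
  let ?\<beta> = "relabel N M k \<alpha>"
  define D where "D m = int (?\<beta> m) - int (\<alpha> m) - relabel_offset k m" for m
  have D: "int M dvd D m" if "m \<in> {1..N - 1}" for m
    unfolding D_def using relabel_cong[OF M \<alpha> that] .
  have offset_N: "relabel_offset k (N - 1) = (if N = k then sgn1 k else 0)"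
    using relabel_offset_adjacent[of N k] N k unfolding relabel_offset_def by auto
  consider "j = 1" | "j = N" "j \<noteq> 1" | "2 \<le> j" "j \<le> N - 1" using j by force
  then show ?thesis
  proof cases
    case 1
    then have "int (J2 N ?\<beta> j) - int (J1 N \<alpha> j) - (if j = k then sgn1 k else 0) = D 1"
      using k unfolding J2_def J1_def D_def relabel_offset_def sgn1_def by auto
    then show ?thesis using D[of 1] N by auto
  next
    case 2
    then have "int (J2 N ?\<beta> j) - int (J1 N \<alpha> j) - (if j = k then sgn1 k else 0) = D (N - 1)"
      using offset_N unfolding J2_def J1_def D_def by auto
    then show ?thesis using D[of "N - 1"] N by auto
  next
    case 3
    have jj: "j - 1 \<in> {1..N - 1}" "j \<in> {1..N - 1}" using 3 by auto
    have \<beta>: "?\<beta> \<in> alpha_space N M" using relabel_in_alpha_space[OF M \<alpha>] .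
    have "int (J2 N ?\<beta> j) - int (J1 N \<alpha> j) - (if j = k then sgn1 k else 0) = D (j - 1) + D j"
      using 3 N relabel_offset_adjacent[of j k]
        alpha_space_bounds[OF \<alpha> jj(1)] alpha_space_bounds[OF \<alpha> jj(2)]
        alpha_space_bounds[OF \<beta> jj(1)] alpha_space_bounds[OF \<beta> jj(2)]
      unfolding J2_def J1_def D_def by (auto simp: of_nat_diff)
    then show ?thesis using D[OF jj(1)] D[OF jj(2)] by auto
  qed
qed

lemma alt_sum_J2_relabel:
  assumes N: "N \<ge> 2" and M: "M \<ge> 1" and \<alpha>: "\<alpha> \<in> alpha_space N M"
  shows "(\<Sum>j=1..N. sgn1 j * int (J2 N (relabel N M k \<alpha>) j)) = (\<Sum>j=1..N. sgn1 j * int (J1 N \<alpha> j)) + 1"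
  using alt_sum_J2[OF N] alt_sum_J1[OF N \<alpha>] alt_sum_J1[OF N relabel_in_alpha_space[OF M \<alpha>]]
  by simp

lemma sidx_int: "J \<ge> 1 \<Longrightarrow> int (sidx M J) = (int J - 1) mod int M + 1"
  unfolding sidx_def by (simp add: of_nat_mod of_nat_diff)

lemma sshift_int: "J \<ge> 1 \<Longrightarrow> int (sshift M J) = (int J - 1) div int M"
  unfolding sshift_def by (simp add: of_nat_div of_nat_diff)

lemma sidx_plus_sshift: "J \<ge> 1 \<Longrightarrow> int M * int (sshift M J) = int J - int (sidx M J)"
  unfolding sshift_int sidx_int
  by (metis add.commute diff_diff_eq minus_mod_eq_mult_div mult.commute)

lemma sidx_in_range: "M > 0 \<Longrightarrow> sidx M j \<in> {1..M}"
  unfolding sidx_def by (auto simp: Suc_le_eq)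

lemma bracket_setting_in_settings_space: "M > 0 \<Longrightarrow> bracket_setting N M J \<in> settings_space N M"
  unfolding bracket_setting_def settings_space_def using sidx_in_range by auto

lemma sidx_of_cong:
  assumes "J \<ge> 1" "J' \<ge> 1" "int M dvd (int J' - int J - c)"
  shows "int (sidx M J') = (int J + c - 1) mod int M + 1"
proof -
  have "(int J' - 1) mod int M = (int J + c - 1) mod int M"
    using assms(3) by (simp add: mod_eq_dvd_iff algebra_simps)
  then show ?thesis using sidx_int[OF assms(2)] by simp
qed

lemma sidx_eq_of_dvd:
  assumes "J \<ge> 1" "J' \<ge> 1" "int M dvd (int J' - int J)"
  shows "sidx M J' = sidx M J"
  using sidx_of_cong[of J J' M 0] sidx_int[of J M] assms by simp

text \<open>Multiplied by \<open>M\<close>, each shift becomes \<open>J - sidx M J\<close>; the congruences cancel the \<open>sidx\<close>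
  terms off party \<open>k\<close>, and the alternating sums of \<open>J\<close> and \<open>J'\<close> differ by one.\<close>

lemma alt_sum_sshift_balance:
  assumes M: "M > 0" and k: "k \<in> {1..N}"
    and pos: "\<And>j. j \<in> {1..N} \<Longrightarrow> J j \<ge> 1 \<and> J' j \<ge> 1"
    and cong: "\<And>j. j \<in> {1..N} \<Longrightarrow> int M dvd (int (J' j) - int (J j) - (if j = k then sgn1 k else 0))"
    and alt: "(\<Sum>j=1..N. sgn1 j * int (J' j)) = (\<Sum>j=1..N. sgn1 j * int (J j)) + 1"
  shows "(\<Sum>j=1..N. sgn1 j * int (sshift M (J' j))) - (\<Sum>j\<in>{1..N} - {k}. sgn1 j * int (sshift M (J j)))
       = sgn1 k * ((int (J k) + sgn1 k - 1) div int M)"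
    (is "?lhs = ?rhs")
proof -
  let ?\<sigma> = "sgn1 k" and ?r = "int (sidx M (J' k))"
  have fin: "finite {1..N}" by simp
  have sidx_eq: "sidx M (J' j) = sidx M (J j)" if "j \<in> {1..N} - {k}" for j
    using sidx_eq_of_dvd[of "J j" "J' j" M] pos[of j] cong[of j] that by auto
  have r: "?r = (int (J k) + ?\<sigma> - 1) mod int M + 1"
    using sidx_of_cong[of "J k" "J' k" M "sgn1 k"] pos[OF k] cong[OF k] by simp
  have "int M * ?lhs = (\<Sum>j=1..N. sgn1 j * (int (J' j) - int (sidx M (J' j))))
      - (\<Sum>j\<in>{1..N} - {k}. sgn1 j * (int (J j) - int (sidx M (J j))))"
    using pos by (simp add: right_diff_distrib sum_distrib_left sidx_plus_sshift[symmetric] mult_ac)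
  also have "\<dots> = ?\<sigma> * int (J k) + 1 - ?\<sigma> * ?r"
  proof -
    have "(\<Sum>j=1..N. sgn1 j * int (sidx M (J' j)))
        = ?\<sigma> * ?r + (\<Sum>j\<in>{1..N} - {k}. sgn1 j * int (sidx M (J j)))"
      by (subst sum.remove[OF fin k]) (auto simp: sidx_eq intro!: sum.cong)
    moreover have "(\<Sum>j=1..N. sgn1 j * int (J j)) = ?\<sigma> * int (J k) + (\<Sum>j\<in>{1..N} - {k}. sgn1 j * int (J j))"
      by (rule sum.remove[OF fin k])
    ultimately show ?thesis
      using alt by (simp add: right_diff_distrib sum_subtractf)
  qed
  also have "\<dots> = int M * ?rhs"
  proof -
    have "int M * ((int (J k) + ?\<sigma> - 1) div int M) = int (J k) + ?\<sigma> - ?r"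
      using r minus_mod_eq_mult_div[of "int (J k) + ?\<sigma> - 1" "int M"] by linarith
    then have "int M * ?rhs = ?\<sigma> * (int (J k) + ?\<sigma> - ?r)"
      by (simp add: mult.left_commute)
    also have "\<dots> = ?\<sigma> * int (J k) + ?\<sigma> * ?\<sigma> - ?\<sigma> * ?r"
      by (simp add: algebra_simps)
    finally show ?thesis
      by (simp add: sgn1_mult_self)
  qed
  finally show ?thesis using M by simp
qed

text \<open>The expectation of \<open>[sgn1 k \<cdot> A\<^sup>(\<^sup>k\<^sup>)\<^sub>m - t]\<close>, where party \<open>k\<close> measures the observable with
  integer index \<open>m\<close> (read as \<open>A\<^sub>i\<^sub>M\<^sub>+\<^sub>\<gamma> = [A\<^sub>\<gamma> + i]\<close>, also for \<open>m \<le> 0\<close>) and the others measure \<open>x\<close>.\<close>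

definition party_exp ::
  "nat \<Rightarrow> nat \<Rightarrow> nat \<Rightarrow> ((nat \<Rightarrow> nat) \<Rightarrow> (nat \<Rightarrow> nat) \<Rightarrow> real) \<Rightarrow> nat \<Rightarrow> (nat \<Rightarrow> nat) \<Rightarrow> int \<Rightarrow> int \<Rightarrow> real" where
  "party_exp N M d p k x t m = (\<Sum>a\<in>outcomes_space N d. p (x(k := nat ((m - 1) mod int M + 1))) a *
      of_int ((sgn1 k * (int (a k) + (m - 1) div int M) - t) mod int d))"

lemma party_exp_add_period:
  assumes "M > 0"
  shows "party_exp N M d p k x (t + sgn1 k) (m + int M) = party_exp N M d p k x t m"
proof -
  have "(m + int M - 1) mod int M = (m - 1) mod int M"
    by (metis add.commute add_diff_eq mod_add_self2)
  moreover have "(m + int M - 1) div int M = (m - 1) div int M + 1"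
    using div_add_self2[of "int M" "m - 1"] assms by (simp add: algebra_simps)
  ultimately show ?thesis
    unfolding party_exp_def by (simp add: algebra_simps)
qed

lemma sum_eq_party_exp:
  assumes ns: "nonsignalling N M d p" and d: "d > 0" and M: "M > 0" and k: "k \<in> {1..N}"
    and x: "x \<in> settings_space N M" and y: "y \<in> settings_space N M"
    and yk: "int (y k) = (m - 1) mod int M + 1"
  shows "(\<Sum>a\<in>outcomes_space N d. p y a * of_int ((sgn1 k * (int (a k) + (m - 1) div int M) - t) mod int d))
      = party_exp N M d p k x t m"
proof -
  have "nat ((m - 1) mod int M + 1) = y k" using yk by simp
  moreover have "y k \<in> {1..M}" using y k unfolding settings_space_def by auto
  ultimately show ?thesis
    unfolding party_exp_def using k
    by (intro nonsignalling_party_exp_eq[OF ns d k y settings_space_fun_upd[OF x k]]) auto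
qed

lemma bracket_exp_remove_party:
  assumes "k \<in> {1..N}"
  shows "bracket_exp N M d p J \<sigma> = (\<Sum>a\<in>outcomes_space N d. p (bracket_setting N M J) a *
     of_int ((\<sigma> k * (int (a k) + int (sshift M (J k)))
       + (\<Sum>j\<in>{1..N} - {k}. \<sigma> j * (int (a j) + int (sshift M (J j))))) mod int d))"
proof -
  have "(\<Sum>j\<in>{1..N}. f j) = f k + (\<Sum>j\<in>{1..N} - {k}. f j)" for f :: "nat \<Rightarrow> int"
    using sum.remove[OF finite_atLeastAtMost assms] .
  then show ?thesis
    unfolding bracket_exp_def by simp
qed

text \<open>By \<open>J2_relabel_cong\<close> the two settings agree off party \<open>k\<close>, so \<open>chained_brackets_ge\<close> applies
  once \<open>alt_sum_sshift_balance\<close> has collected all observable shifts at party \<open>k\<close>.\<close>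

lemma bracket_pair_ge:
  assumes N: "N \<ge> 2" and M: "M \<ge> 1" and d: "d > 0" and ns: "nonsignalling N M d p"
    and p_nonneg: "\<forall>x\<in>settings_space N M. \<forall>a\<in>outcomes_space N d. p x a \<ge> 0"
    and k: "k \<in> {1..N}" and x: "x \<in> settings_space N M" and \<alpha>: "\<alpha> \<in> alpha_space N M"
  shows "bracket_exp N M d p (J1 N \<alpha>) sgn1 + bracket_exp N M d p (J2 N (relabel N M k \<alpha>)) (\<lambda>j. - sgn1 j)
     \<ge> party_exp N M d p k x t (int (J1 N \<alpha> k)) - party_exp N M d p k x t (int (J1 N \<alpha> k) + sgn1 k)"
proof -
  define J where "J = J1 N \<alpha>"
  define J' where "J' = J2 N (relabel N M k \<alpha>)"
  define \<sigma> where "\<sigma> = sgn1 k"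
  define i where "i = int (J k)"
  define sh where "sh j = int (sshift M (J j))" for j
  define u where "u a = (\<Sum>j\<in>{1..N} - {k}. sgn1 j * (int (a j) + sh j))" for a :: "nat \<Rightarrow> nat"
  let ?x1 = "bracket_setting N M J" and ?x2 = "bracket_setting N M J'"
  have M0: "M > 0" using M by simp
  have pos: "J j \<ge> 1 \<and> J' j \<ge> 1" if "j \<in> {1..N}" for j
    unfolding J_def J'_def using J1_ge_1[OF N \<alpha> that] J2_ge_1[OF N relabel_in_alpha_space[OF M \<alpha>] that] by simp
  have cong: "int M dvd (int (J' j) - int (J j) - (if j = k then sgn1 k else 0))" if "j \<in> {1..N}" for j
    unfolding J'_def J_def using J2_relabel_cong[OF N M \<alpha> k that] .
  have agree: "?x1 j = ?x2 j" if "j \<in> {1..N}" "j \<noteq> k" for j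
    using sidx_eq_of_dvd[of "J j" "J' j" M] pos[OF that(1)] cong[OF that(1)] that
    unfolding bracket_setting_def by simp
  have balance: "\<sigma> * int (sshift M (J' k)) + (\<Sum>j\<in>{1..N} - {k}. sgn1 j * (int (sshift M (J' j)) - sh j))
      = \<sigma> * ((i + \<sigma> - 1) div int M)"
    using alt_sum_sshift_balance[OF M0 k pos cong] alt_sum_J2_relabel[OF N M \<alpha>]
      sum.remove[OF finite_atLeastAtMost k, of "\<lambda>j. sgn1 j * int (sshift M (J' j))"]
    unfolding J_def J'_def sh_def \<sigma>_def i_def by (simp add: right_diff_distrib sum_subtractf)
  have E1: "bracket_exp N M d p J sgn1 =
      (\<Sum>a\<in>outcomes_space N d. p ?x1 a * of_int ((\<sigma> * (int (a k) + sh k) + u a) mod int d))"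
    unfolding bracket_exp_remove_party[OF k] u_def sh_def \<sigma>_def ..
  have E2: "bracket_exp N M d p J' (\<lambda>j. - sgn1 j) =
      (\<Sum>a\<in>outcomes_space N d. p ?x2 a * of_int ((- ((\<sigma> * int (a k) + \<sigma> * ((i + \<sigma> - 1) div int M)) + u a)) mod int d))"
    unfolding bracket_exp_remove_party[OF k] balance[symmetric] u_def
    by (simp add: sum.distrib sum_subtractf sum_negf algebra_simps \<sigma>_def)
  have "bracket_exp N M d p J sgn1 + bracket_exp N M d p J' (\<lambda>j. - sgn1 j)
      \<ge> (\<Sum>a\<in>outcomes_space N d. p ?x1 a * of_int ((\<sigma> * (int (a k) + (i - 1) div int M) - t) mod int d))
       - (\<Sum>a\<in>outcomes_space N d. p ?x2 a * of_int ((\<sigma> * (int (a k) + (i + \<sigma> - 1) div int M) - t) mod int d))"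
    unfolding E1 E2
    using chained_brackets_ge[OF ns p_nonneg d k bracket_setting_in_settings_space[OF M0]
        bracket_setting_in_settings_space[OF M0] agree, where u=u and z="\<lambda>b. \<sigma> * (int b + sh k)"
        and z'="\<lambda>b. \<sigma> * int b + \<sigma> * ((i + \<sigma> - 1) div int M)" and t=t]
    unfolding sh_def i_def using sshift_int[of "J k" M] pos[OF k]
    by (simp add: u_def algebra_simps)
  moreover have "int (?x1 k) = (i - 1) mod int M + 1" "int (?x2 k) = (i + \<sigma> - 1) mod int M + 1"
    using sidx_int[of "J k" M] sidx_of_cong[of "J k" "J' k" M \<sigma>] pos[OF k] cong[OF k] k
    unfolding bracket_setting_def i_def \<sigma>_def by auto
  ultimately show ?thesis
    using sum_eq_party_exp[OF ns d M0 k x bracket_setting_in_settings_space[OF M0]]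
    unfolding J_def J'_def i_def \<sigma>_def by simp
qed

lemma sum_lessThan_periodic_shift:
  fixes G :: "nat \<Rightarrow> 'a :: cancel_comm_monoid_add"
  assumes per: "\<And>i. G (i + M) = G i"
  shows "(\<Sum>n<M. G (c + n)) = (\<Sum>n<M. G n)"
proof (induction c)
  case (Suc c)
  have "(\<Sum>n<M. G (Suc c + n)) + G c = G c + (\<Sum>n<M. G (c + Suc n))"
    by (simp add: add.commute)
  also have "\<dots> = (\<Sum>n<Suc M. G (c + n))"
    by (subst sum.lessThan_Suc_shift) simp
  also have "\<dots> = (\<Sum>n<M. G (c + n)) + G c"
    using per[of c] by (simp add: add.commute)
  finally show ?case using Suc by simp
qed simp

text \<open>Only the coordinates \<open>k - 1\<close> and \<open>k\<close> of \<open>\<alpha>\<close> enter \<open>J1 N \<alpha> k\<close>; summing over one of them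
  runs through a full period.\<close>

lemma sum_alpha_space_J1_periodic:
  fixes G :: "nat \<Rightarrow> real"
  assumes N: "N \<ge> 2" and k: "k \<in> {1..N}" and per: "\<And>i. G (i + M) = G i"
  shows "(\<Sum>\<alpha>\<in>alpha_space N M. G (J1 N \<alpha> k)) = real M ^ (N - 2) * (\<Sum>n<M. G n)"
proof -
  define \<kappa> where "\<kappa> = min k (N - 1)"
  define R where "R = {1..N - 1} - {\<kappa>}"
  define c where "c h = (if 2 \<le> k \<and> k \<le> N - 1 then h (k - 1) else 1)" for h :: "nat \<Rightarrow> nat"
  have \<kappa>: "\<kappa> \<in> {1..N - 1}" unfolding \<kappa>_def using k N by auto
  have split: "alpha_space N M = PiE (insert \<kappa> R) (\<lambda>_. {1..M})"
    unfolding alpha_space_def R_def using \<kappa> by (simp add: insert_absorb)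
  have inner: "(\<Sum>v\<in>{1..M}. G (J1 N (h(\<kappa> := v)) k)) = (\<Sum>n<M. G n)" for h
  proof -
    have "J1 N (h(\<kappa> := v)) k = c h + v - 1" for v
      using N k unfolding J1_def c_def \<kappa>_def by auto
    then have "(\<Sum>v\<in>{1..M}. G (J1 N (h(\<kappa> := v)) k)) = (\<Sum>n<M. G (c h + n))"
      by (simp add: sum.atLeast1_atMost_eq)
    then show ?thesis using sum_lessThan_periodic_shift[of G M, OF per] by simp
  qed
  have "card (PiE R (\<lambda>_. {1..M})) = M ^ (N - 2)"
    using \<kappa> unfolding R_def by (simp add: card_PiE card_Diff_singleton numeral_2_eq_2)
  moreover have "(\<Sum>\<alpha>\<in>alpha_space N M. G (J1 N \<alpha> k))
      = (\<Sum>h\<in>PiE R (\<lambda>_. {1..M}). \<Sum>v\<in>{1..M}. G (J1 N (h(\<kappa> := v)) k))"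
    unfolding split by (rule sum_PiE_insert) (auto simp: R_def)
  ultimately show ?thesis
    unfolding inner by simp
qed

lemma sum_lessThan_telescope_sgn:
  fixes V :: "int \<Rightarrow> real"
  assumes \<sigma>: "\<sigma> = 1 \<or> \<sigma> = -1" and w: "w = (if \<sigma> = 1 then c else c + 1)"
  shows "(\<Sum>n<M. V (w + int n) - V (w + int n + \<sigma>)) = of_int \<sigma> * (V c - V (c + int M))"
  using \<sigma>
proof
  assume "\<sigma> = 1"
  then show ?thesis
    using w sum_lessThan_telescope'[of "\<lambda>n. V (c + int n)" M] by (simp add: algebra_simps)
next
  assume "\<sigma> = -1"
  then show ?thesis
    using w sum_lessThan_telescope[of "\<lambda>n. V (c + int n)" M] by (simp add: algebra_simps)
qed

lemma mod_step_indicator: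
  assumes a: "a < d" and s: "s < d" and \<sigma>: "\<sigma> = 1 \<or> \<sigma> = -1"
    and t: "t = (if \<sigma> = 1 then int s + 1 else - int s)"
  shows "\<sigma> * ((\<sigma> * int a - t) mod int d - (\<sigma> * (int a + 1) - t) mod int d) = (if a = s then int d - 1 else -1)"
proof -
  have d: "int d > 0" using a by simp
  have step: "(y - 1) mod int d - y mod int d = (if a = s then int d - 1 else -1)"
    if "y mod int d = 0 \<longleftrightarrow> a = s" for y
    using mod_diff_one_minus_mod[OF d, of y] that by simp
  show ?thesis
    using \<sigma>
  proof
    assume "\<sigma> = 1"
    with t step[of "int a - int s"] diff_mod_eq_0_iff[OF a s] show ?thesis
      by (simp add: algebra_simps)
  next
    assume "\<sigma> = -1"
    with t step[of "int s - int a"] diff_mod_eq_0_iff[OF s a] show ?thesis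
      by (auto simp: algebra_simps)
  qed
qed

lemma sum_indicator_marginal:
  assumes k: "k \<in> {1..N}" and s: "s < d" and total: "(\<Sum>a\<in>outcomes_space N d. p x a) = 1"
  shows "(\<Sum>a\<in>outcomes_space N d. p x a * (if a k = s then real d - 1 else -1)) = real d * marginal N d p x k s - 1"
proof -
  have "(\<Sum>a\<in>outcomes_space N d. p x a * (if a k = s then real d - 1 else -1))
      = (\<Sum>b<d. (if b = s then real d * marginal N d p x k b else 0) - marginal N d p x k b)"
    unfolding sum_outcomes_space_party[OF k, of p x "\<lambda>b. if b = s then real d - 1 else -1"] by (intro sum.cong) (auto simp: algebra_simps)
  also have "\<dots> = real d * marginal N d p x k s - 1"
    using s total sum_marginal[OF k] by (simp add: sum_subtractf)
  finally show ?thesis .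
qed

text \<open>Raising the observable index by \<open>M\<close> at fixed \<open>t\<close> adds one to party \<open>k\<close>'s outcome inside the
  bracket; with this \<open>t\<close> the change detects the outcome \<open>s\<close>.\<close>

lemma party_exp_full_period:
  assumes M: "M > 0" and d: "d > 0" and k: "k \<in> {1..N}" and x: "x \<in> settings_space N M"
    and s: "s < d" and total: "(\<Sum>a\<in>outcomes_space N d. p x a) = 1"
    and t: "t = (if sgn1 k = 1 then int s + 1 else - int s)"
  shows "of_int (sgn1 k) * (party_exp N M d p k x t (int (x k)) - party_exp N M d p k x t (int (x k) + int M))
    = real d * marginal N d p x k s - 1"
proof -
  have xk: "x k \<in> {1..M}" using x k unfolding settings_space_def by auto
  then have "(int (x k) - 1) mod int M = int (x k) - 1" "(int (x k) - 1) div int M = 0"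
    "(int (x k) + int M - 1) mod int M = int (x k) - 1" "(int (x k) + int M - 1) div int M = 1"
    using div_add_self2[of "int M" "int (x k) - 1"] mod_add_self2[of "int (x k) - 1" "int M"]
    by (auto simp: algebra_simps)
  then have "of_int (sgn1 k) * (party_exp N M d p k x t (int (x k)) - party_exp N M d p k x t (int (x k) + int M))
      = (\<Sum>a\<in>outcomes_space N d. p x a * of_int (sgn1 k * ((sgn1 k * int (a k) - t) mod int d
          - (sgn1 k * (int (a k) + 1) - t) mod int d)))"
    using xk unfolding party_exp_def
    by (simp add: sum_distrib_left sum_subtractf[symmetric] algebra_simps)
  also have "\<dots> = (\<Sum>a\<in>outcomes_space N d. p x a * (if a k = s then real d - 1 else -1))"
    using mod_step_indicator[OF outcomes_space_lessD[OF _ k] s sgn1_cases t]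
    by (intro sum.cong) (auto simp: of_nat_diff)
  finally show ?thesis
    using sum_indicator_marginal[where p=p and x=x, OF k s total] by simp
qed

lemma bell_I_relabel:
  assumes "M \<ge> 1"
  shows "bell_I N M d p = 1 / real M ^ (N - 2) * (\<Sum>\<alpha>\<in>alpha_space N M.
    bracket_exp N M d p (J1 N \<alpha>) sgn1 + bracket_exp N M d p (J2 N (relabel N M k \<alpha>)) (\<lambda>j. - sgn1 j))"
  unfolding bell_I_def sum.distrib
  using sum.reindex_bij_betw[OF bij_betw_relabel[OF assms],
      of "\<lambda>\<alpha>. bracket_exp N M d p (J2 N \<alpha>) (\<lambda>j. - sgn1 j)" N k]
  by simp

text \<open>Sum \<open>bracket_pair_ge\<close> over \<open>\<alpha>\<close>. The free parameter \<open>t\<close> is chosen to move by \<open>sgn1 k\<close> per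
  period of the observable index, which makes the lower bound \<open>G\<close> periodic; over one period
  it telescopes to \<open>party_exp_full_period\<close>.\<close>

lemma marginal_le_bell_I:
  assumes N: "N \<ge> 2" and M: "M \<ge> 1" and d: "d > 0" and ns: "nonsignalling N M d p"
    and p_nonneg: "\<forall>x\<in>settings_space N M. \<forall>a\<in>outcomes_space N d. p x a \<ge> 0"
    and p_sum: "\<forall>x\<in>settings_space N M. (\<Sum>a\<in>outcomes_space N d. p x a) = 1"
    and k: "k \<in> {1..N}" and x: "x \<in> settings_space N M" and s: "s < d"
  shows "real d * marginal N d p x k s - 1 \<le> bell_I N M d p"
proof -
  define \<sigma> where "\<sigma> = sgn1 k"
  define t0 where "t0 = (if \<sigma> = 1 then int s + 1 else - int s)"
  define w0 where "w0 = (if \<sigma> = 1 then int (x k) else int (x k) + 1)"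
  define V where "V = party_exp N M d p k x"
  define G where "G n = V (t0 + \<sigma> * ((int n - w0) div int M)) (int n)
    - V (t0 + \<sigma> * ((int n - w0) div int M)) (int n + \<sigma>)" for n
  have M0: "M > 0" using M by simp
  have per: "G (i + M) = G i" for i
  proof -
    let ?t = "t0 + \<sigma> * ((int i - w0) div int M)"
    have "t0 + \<sigma> * ((int (i + M) - w0) div int M) = ?t + \<sigma>"
      using div_add_self2[of "int M" "int i - w0"] M0 by (simp add: algebra_simps)
    moreover have "int (i + M) = int i + int M" "int (i + M) + \<sigma> = (int i + \<sigma>) + int M"
      by simp_all
    ultimately have "G (i + M) = V (?t + \<sigma>) (int i + int M) - V (?t + \<sigma>) ((int i + \<sigma>) + int M)"
      by (simp only: G_def)
    then show ?thesis
      unfolding G_def V_def \<sigma>_def party_exp_add_period[OF M0] .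
  qed
  have w0: "w0 \<ge> 0" unfolding w0_def by simp
  have "(\<Sum>n<M. G (nat w0 + n)) = (\<Sum>n<M. V t0 (w0 + int n) - V t0 (w0 + int n + \<sigma>))"
    using w0 unfolding G_def by (intro sum.cong) auto
  also have "\<dots> = of_int \<sigma> * (V t0 (int (x k)) - V t0 (int (x k) + int M))"
    by (rule sum_lessThan_telescope_sgn) (auto simp: \<sigma>_def sgn1_cases w0_def)
  also have "\<dots> = real d * marginal N d p x k s - 1"
    unfolding V_def \<sigma>_def using party_exp_full_period[OF M0 d k x s] p_sum x t0_def \<sigma>_def by simp
  finally have window: "(\<Sum>n<M. G n) = real d * marginal N d p x k s - 1"
    using sum_lessThan_periodic_shift[of G M, OF per] by simp
  have "real M ^ (N - 2) * (\<Sum>n<M. G n) = (\<Sum>\<alpha>\<in>alpha_space N M. G (J1 N \<alpha> k))"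
    using sum_alpha_space_J1_periodic[OF N k, of G M, OF per] by simp
  also have "\<dots> \<le> (\<Sum>\<alpha>\<in>alpha_space N M. bracket_exp N M d p (J1 N \<alpha>) sgn1
      + bracket_exp N M d p (J2 N (relabel N M k \<alpha>)) (\<lambda>j. - sgn1 j))"
    unfolding G_def V_def \<sigma>_def
    by (intro sum_mono bracket_pair_ge[OF N M d ns p_nonneg k x])
  finally show ?thesis
    unfolding bell_I_relabel[OF M, of N d p k] window using M0 by (simp add: field_simps)
qed

lemma exists_le_ge_mean:
  fixes \<mu> :: "nat \<Rightarrow> real"
  assumes d: "d > 0" and total: "(\<Sum>b<d. \<mu> b) = 1"
  shows "\<exists>b<d. \<mu> b \<le> 1 / real d" and "\<exists>b<d. \<mu> b \<ge> 1 / real d"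
proof (rule_tac [!] ccontr)
  assume "\<not> (\<exists>b<d. \<mu> b \<le> 1 / real d)"
  then have "(\<Sum>b<d. 1 / real d) < (\<Sum>b<d. \<mu> b)" using d by (intro sum_strict_mono) auto
  then show False using total d by simp
next
  assume "\<not> (\<exists>b<d. \<mu> b \<ge> 1 / real d)"
  then have "(\<Sum>b<d. \<mu> b) < (\<Sum>b<d. 1 / real d)" using d by (intro sum_strict_mono) auto
  then show False using total d by simp
qed

text \<open>The total variation distance of \<open>\<mu>\<close> from the uniform distribution is the total excess
  over \<open>1/d\<close>, and at most \<open>d - 1\<close> outcomes have an excess, each at most \<open>I/d\<close>.\<close>

lemma half_sum_abs_diff_uniform_le:
  fixes \<mu> :: "nat \<Rightarrow> real"
  assumes d: "d > 0" and total: "(\<Sum>b<d. \<mu> b) = 1"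
    and bound: "\<And>s. s < d \<Longrightarrow> real d * \<mu> s - 1 \<le> I"
  shows "(1/2) * (\<Sum>b<d. \<bar>\<mu> b - 1 / real d\<bar>) \<le> (real d - 1) / real d * I"
proof -
  have dpos: "real d > 0" using d by simp
  obtain b1 where "b1 < d" "\<mu> b1 \<ge> 1 / real d" using exists_le_ge_mean(2)[OF d total] by blast
  then have I: "I \<ge> 0" using bound[of b1] dpos by (simp add: field_simps)
  obtain b0 where b0: "b0 < d" "\<mu> b0 \<le> 1 / real d" using exists_le_ge_mean(1)[OF d total] by blast
  have "\<bar>y\<bar> = 2 * max y 0 - y" for y :: real by auto
  then have "(\<Sum>b<d. \<bar>\<mu> b - 1 / real d\<bar>) = 2 * (\<Sum>b<d. max (\<mu> b - 1 / real d) 0) - (\<Sum>b<d. \<mu> b - 1 / real d)"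
    by (simp only: sum_subtractf sum_distrib_left)
  also have "(\<Sum>b<d. \<mu> b - 1 / real d) = 0" using total dpos by (simp add: sum_subtractf)
  also have "(\<Sum>b<d. max (\<mu> b - 1 / real d) 0) = (\<Sum>b\<in>{..<d} - {b0}. max (\<mu> b - 1 / real d) 0)"
    using b0 by (subst sum.remove[of _ b0]) auto
  also have "\<dots> \<le> (\<Sum>b\<in>{..<d} - {b0}. I / real d)"
  proof (rule sum_mono)
    fix b assume "b \<in> {..<d} - {b0}"
    then have "(real d * \<mu> b - 1) / real d \<le> I / real d"
      using bound[of b] dpos by (intro divide_right_mono) auto
    then have "\<mu> b - 1 / real d \<le> I / real d"
      using dpos by (simp add: diff_divide_distrib)
    then show "max (\<mu> b - 1 / real d) 0 \<le> I / real d" using I dpos by simp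
  qed
  also have "\<dots> = (real d - 1) * (I / real d)"
    using b0 d by (simp add: card_Diff_singleton of_nat_diff)
  finally show ?thesis
    by (simp add: mult_ac)
qed

lemma half_sum_abs_marginal_le_bell_I:
  assumes N: "N \<ge> 2" and M: "M \<ge> 1" and d: "d > 0" and ns: "nonsignalling N M d p"
    and p_nonneg: "\<forall>x\<in>settings_space N M. \<forall>a\<in>outcomes_space N d. p x a \<ge> 0"
    and p_sum: "\<forall>x\<in>settings_space N M. (\<Sum>a\<in>outcomes_space N d. p x a) = 1"
    and k: "k \<in> {1..N}" and x: "x \<in> settings_space N M"
  shows "(1/2) * (\<Sum>b<d. \<bar>marginal N d p x k b - 1 / real d\<bar>) \<le> (real d - 1) / real d * bell_I N M d p"
proof -
  have "(\<Sum>b<d. marginal N d p x k b) = 1"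
    using sum_marginal[OF k] p_sum x by simp
  from half_sum_abs_diff_uniform_le[where \<mu>="marginal N d p x k", OF d this
      marginal_le_bell_I[OF N M d ns p_nonneg p_sum k x]]
  show ?thesis .
qed

lemma bracket_exp_observed:
  "bracket_exp N M d (observed W pw pxw P) J \<sigma> =
     (\<Sum>w\<in>W. p_w_given_x W pw pxw w (bracket_setting N M J) * bracket_exp N M d (P w) J \<sigma>)"
  unfolding bracket_exp_def observed_def sum_distrib_left sum_distrib_right mult.assoc
  by (rule sum.swap)

lemma bracket_exp_nonneg:
  assumes "d > 0" "M > 0" "\<forall>x\<in>settings_space N M. \<forall>a\<in>outcomes_space N d. p x a \<ge> 0"
  shows "bracket_exp N M d p J \<sigma> \<ge> 0"
  unfolding bracket_exp_def using assms bracket_setting_in_settings_space[OF assms(2)]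
  by (intro sum_nonneg mult_nonneg_nonneg) auto

lemma bell_I_nonneg:
  assumes "d > 0" "M > 0" "\<forall>x\<in>settings_space N M. \<forall>a\<in>outcomes_space N d. p x a \<ge> 0"
  shows "bell_I N M d p \<ge> 0"
  unfolding bell_I_def using bracket_exp_nonneg[OF assms]
  by (intro mult_nonneg_nonneg sum_nonneg add_nonneg_nonneg) simp_all

lemma observed_nonneg:
  assumes "\<forall>w\<in>W. pw w \<ge> 0" "\<forall>w\<in>W. \<forall>x\<in>settings_space N M. pxw w x \<ge> 0"
    and "\<forall>w\<in>W. \<forall>x\<in>settings_space N M. \<forall>a\<in>outcomes_space N d. P w x a \<ge> 0"
  shows "\<forall>x\<in>settings_space N M. \<forall>a\<in>outcomes_space N d. observed W pw pxw P x a \<ge> 0"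
  unfolding observed_def p_w_given_x_def p_x_def using assms
  by (auto intro!: sum_nonneg mult_nonneg_nonneg divide_nonneg_nonneg)

text \<open>Since every bracket of \<open>I\<^sup>N\<^sup>,\<^sup>M\<^sup>,\<^sup>d\<close> is nonnegative, weights that are below all the posterior
  probabilities \<open>p(w|x')\<close> of the settings \<open>x'\<close> appearing in it bound the observed value below.\<close>

lemma bell_I_observed_ge:
  assumes d: "d > 0" and M: "M > 0"
    and P_nonneg: "\<forall>w\<in>W. \<forall>x\<in>settings_space N M. \<forall>a\<in>outcomes_space N d. P w x a \<ge> 0"
    and r: "\<And>w y. w \<in> W \<Longrightarrow> y \<in> settings_appearing N M \<Longrightarrow> r w \<le> p_w_given_x W pw pxw w y"
  shows "(\<Sum>w\<in>W. r w * bell_I N M d (P w)) \<le> bell_I N M d (observed W pw pxw P)"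
proof -
  have bracket: "(\<Sum>w\<in>W. r w * bracket_exp N M d (P w) J \<sigma>) \<le> bracket_exp N M d (observed W pw pxw P) J \<sigma>"
    if "bracket_setting N M J \<in> settings_appearing N M" for J \<sigma>
    unfolding bracket_exp_observed
    using r[OF _ that] bracket_exp_nonneg[OF d M] P_nonneg
    by (intro sum_mono mult_right_mono) auto
  have "(\<Sum>w\<in>W. r w * bell_I N M d (P w)) = 1 / real M ^ (N - 2) * (\<Sum>\<alpha>\<in>alpha_space N M.
      (\<Sum>w\<in>W. r w * bracket_exp N M d (P w) (J1 N \<alpha>) sgn1)
      + (\<Sum>w\<in>W. r w * bracket_exp N M d (P w) (J2 N \<alpha>) (\<lambda>j. - sgn1 j)))"
    unfolding bell_I_def sum_distrib_left sum.distrib distrib_left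
    by (subst (1 2) sum.swap) (simp add: mult_ac)
  also have "\<dots> \<le> bell_I N M d (observed W pw pxw P)"
    unfolding bell_I_def using bracket
    by (intro mult_left_mono sum_mono add_mono) (auto simp: settings_appearing_def)
  finally show ?thesis .
qed

lemma p_x_pos:
  assumes pw_nonneg: "\<forall>w\<in>W. pw w \<ge> 0" and pw_sum: "(\<Sum>w\<in>W. pw w) = 1"
    and pxw_nonneg: "\<forall>w\<in>W. \<forall>x\<in>settings_space N M. pxw w x \<ge> 0"
    and pxw_sum: "\<forall>w\<in>W. (\<Sum>x\<in>settings_space N M. pxw w x) = 1"
    and px_equal: "\<forall>x\<in>settings_space N M. \<forall>y\<in>settings_space N M. p_x W pw pxw x = p_x W pw pxw y"
    and x: "x \<in> settings_space N M"
  shows "p_x W pw pxw x > 0"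
proof -
  have "(\<Sum>y\<in>settings_space N M. p_x W pw pxw y) = (\<Sum>w\<in>W. pw w * (\<Sum>y\<in>settings_space N M. pxw w y))"
    unfolding p_x_def sum_distrib_left by (rule sum.swap)
  also have "\<dots> = 1" using pxw_sum pw_sum by simp
  finally have "(\<Sum>y\<in>settings_space N M. p_x W pw pxw x) = 1"
    using sum.cong[OF refl, of "settings_space N M" "p_x W pw pxw" "\<lambda>_. p_x W pw pxw x"] px_equal x
    by metis
  then have "real (card (settings_space N M)) * p_x W pw pxw x = 1"
    by simp
  moreover have "p_x W pw pxw x \<ge> 0"
    unfolding p_x_def using pw_nonneg pxw_nonneg x by (intro sum_nonneg mult_nonneg_nonneg) auto
  ultimately show ?thesis
    by (cases "p_x W pw pxw x = 0") auto
qed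

lemma frac_pred_le_frac_sq_plus_one:
  assumes "d \<ge> 1"
  shows "(real d - 1) / real d \<le> ((real (d - 1))^2 + 1) / (2 * real d)"
proof -
  have "(real d - 1)^2 + 1 - 2 * (real d - 1) = (real d - 2)^2"
    by (simp add: power2_eq_square algebra_simps)
  then have "2 * (real d - 1) \<le> (real d - 1)^2 + 1"
    using zero_le_power2[of "real d - 2"] by linarith
  then have "(2 * (real d - 1)) / (2 * real d) \<le> ((real d - 1)^2 + 1) / (2 * real d)"
    by (rule divide_right_mono) simp
  moreover have "(real d - 1) / real d = (2 * (real d - 1)) / (2 * real d)"
    by (rule mult_divide_mult_cancel_left[symmetric]) simp
  ultimately show ?thesis
    using assms by (simp add: of_nat_diff)
qed

lemma settings_appearing_subset: "M > 0 \<Longrightarrow> settings_appearing N M \<subseteq> settings_space N M"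
  unfolding settings_appearing_def using bracket_setting_in_settings_space by blast

lemma p_tilde_min_weight_le:
  assumes M: "M > 0" and pw: "pw w \<ge> 0" and c: "p_x W pw pxw x > 0"
    and px_equal: "\<forall>x\<in>settings_space N M. \<forall>y\<in>settings_space N M. p_x W pw pxw x = p_x W pw pxw y"
    and x: "x \<in> settings_space N M" and y: "y \<in> settings_appearing N M"
  shows "p_tilde_min N M pxw w * pw w / p_x W pw pxw x \<le> p_w_given_x W pw pxw w y"
proof -
  have "finite (settings_appearing N M)"
    unfolding settings_appearing_def using finite_alpha_space by simp
  then have "p_tilde_min N M pxw w \<le> pxw w y"
    unfolding p_tilde_min_def using y by (intro Min_le) auto
  moreover have "p_x W pw pxw y = p_x W pw pxw x"
    using px_equal x y settings_appearing_subset[OF M] by blast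
  ultimately show ?thesis
    unfolding p_w_given_x_def using pw c by (simp add: divide_right_mono mult_right_mono)
qed

lemma p_w_given_x_le_Q_tilde:
  assumes "finite W" "w \<in> W" "pw w \<ge> 0" "p_tilde_min N M pxw w > 0" "p_x W pw pxw x > 0"
  shows "p_w_given_x W pw pxw w x \<le> Q_tilde N M W pxw x * (p_tilde_min N M pxw w * pw w / p_x W pw pxw x)"
proof -
  have "pxw w x / p_tilde_min N M pxw w \<le> Q_tilde N M W pxw x"
    unfolding Q_tilde_def using assms(1,2) by (intro Max_ge) auto
  then have "pxw w x * pw w \<le> Q_tilde N M W pxw x * p_tilde_min N M pxw w * pw w"
    using assms(3,4) by (intro mult_right_mono) (auto simp: divide_le_eq)
  then show ?thesis
    unfolding p_w_given_x_def using assms(5) by (simp add: divide_right_mono mult.assoc)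
qed

lemma Q_tilde_nonneg:
  assumes "finite W" "W \<noteq> {}" "\<forall>w\<in>W. pxw w x \<ge> 0" "\<forall>w\<in>W. p_tilde_min N M pxw w > 0"
  shows "Q_tilde N M W pxw x \<ge> 0"
proof -
  obtain w where w: "w \<in> W" using assms(2) by blast
  have "0 \<le> pxw w x / p_tilde_min N M pxw w" using assms(3,4) w by (intro divide_nonneg_pos) auto
  also have "\<dots> \<le> Q_tilde N M W pxw x" unfolding Q_tilde_def using assms(1) w by (intro Max_ge) auto
  finally show ?thesis .
qed

lemma sum_abs_weighted:
  fixes q :: "'w \<Rightarrow> real"
  assumes "\<forall>w\<in>W. q w \<ge> 0"
  shows "(\<Sum>b<d. \<Sum>w\<in>W. \<bar>q w * \<mu> w b - c * q w\<bar>) = (\<Sum>w\<in>W. q w * (\<Sum>b<d. \<bar>\<mu> w b - c\<bar>))"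
proof -
  have "\<bar>q w * \<mu> w b - c * q w\<bar> = q w * \<bar>\<mu> w b - c\<bar>" if "w \<in> W" for w b
  proof -
    have "q w * \<mu> w b - c * q w = q w * (\<mu> w b - c)" by (simp add: algebra_simps)
    then show ?thesis using assms that by (simp add: abs_mult)
  qed
  then show ?thesis
    by (subst sum.swap) (simp add: sum_distrib_left)
qed

lemma half_sum_abs_joint_le_bell_I_observed:
  assumes N: "N \<ge> 2" and M: "M \<ge> 1" and d: "d > 0"
    and W_fin: "finite W" and W_ne: "W \<noteq> {}"
    and pw_nonneg: "\<forall>w\<in>W. pw w \<ge> 0" and pw_sum: "(\<Sum>w\<in>W. pw w) = 1"
    and pxw_nonneg: "\<forall>w\<in>W. \<forall>x\<in>settings_space N M. pxw w x \<ge> 0"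
    and pxw_sum: "\<forall>w\<in>W. (\<Sum>x\<in>settings_space N M. pxw w x) = 1"
    and px_equal: "\<forall>x\<in>settings_space N M. \<forall>y\<in>settings_space N M. p_x W pw pxw x = p_x W pw pxw y"
    and P_nonneg: "\<forall>w\<in>W. \<forall>x\<in>settings_space N M. \<forall>a\<in>outcomes_space N d. P w x a \<ge> 0"
    and P_sum: "\<forall>w\<in>W. \<forall>x\<in>settings_space N M. (\<Sum>a\<in>outcomes_space N d. P w x a) = 1"
    and P_ns: "\<forall>w\<in>W. nonsignalling N M d (P w)"
    and pmin_pos: "\<forall>w\<in>W. p_tilde_min N M pxw w > 0"
    and k: "k \<in> {1..N}" and x: "x \<in> settings_space N M"
  shows "(1/2) * (\<Sum>b<d. \<Sum>w\<in>W.
        \<bar>p_w_given_x W pw pxw w x * marginal N d (P w) x k b - (1 / real d) * p_w_given_x W pw pxw w x\<bar>)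
    \<le> (real d - 1) / real d * Q_tilde N M W pxw x * bell_I N M d (observed W pw pxw P)"
proof -
  define q where "q w = p_w_given_x W pw pxw w x" for w
  define r where "r w = p_tilde_min N M pxw w * pw w / p_x W pw pxw x" for w
  define T where "T w = (1/2) * (\<Sum>b<d. \<bar>marginal N d (P w) x k b - 1 / real d\<bar>)" for w
  define I where "I w = bell_I N M d (P w)" for w
  define C where "C = (real d - 1) / real d"
  define Q where "Q = Q_tilde N M W pxw x"
  have M0: "M > 0" using M by simp
  have c: "p_x W pw pxw x > 0" using p_x_pos[OF pw_nonneg pw_sum pxw_nonneg pxw_sum px_equal x] .
  have q_nonneg: "\<forall>w\<in>W. q w \<ge> 0"
    unfolding q_def p_w_given_x_def using pw_nonneg pxw_nonneg x c by auto
  have q_le: "q w \<le> Q * r w" if "w \<in> W" for w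
    unfolding q_def Q_def r_def using p_w_given_x_le_Q_tilde[OF W_fin that _ _ c] pw_nonneg pmin_pos that by blast
  have r_le: "r w \<le> p_w_given_x W pw pxw w y" if "w \<in> W" "y \<in> settings_appearing N M" for w y
    unfolding r_def using p_tilde_min_weight_le[OF M0 _ c px_equal x that(2)] pw_nonneg that(1) by blast
  have T_le: "T w \<le> C * I w" if "w \<in> W" for w
    unfolding T_def C_def I_def
    using half_sum_abs_marginal_le_bell_I[OF N M d _ _ _ k x] P_ns P_nonneg P_sum that by blast
  have "(1/2) * (\<Sum>b<d. \<Sum>w\<in>W. \<bar>q w * marginal N d (P w) x k b - (1 / real d) * q w\<bar>) = (\<Sum>w\<in>W. q w * T w)"
    unfolding sum_abs_weighted[OF q_nonneg] T_def by (simp add: sum_distrib_left mult_ac)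
  also have "\<dots> \<le> (\<Sum>w\<in>W. (Q * r w) * (C * I w))"
  proof (rule sum_mono)
    fix w assume w: "w \<in> W"
    show "q w * T w \<le> (Q * r w) * (C * I w)"
      using q_le[OF w] T_le[OF w] order_trans[OF bspec[OF q_nonneg w] q_le[OF w]]
      by (rule mult_mono) (simp add: T_def)
  qed
  also have "\<dots> = C * Q * (\<Sum>w\<in>W. r w * I w)"
    by (simp add: sum_distrib_left mult_ac)
  also have "\<dots> \<le> C * Q * bell_I N M d (observed W pw pxw P)"
    unfolding I_def using bell_I_observed_ge[OF d M0 P_nonneg r_le]
      Q_tilde_nonneg[OF W_fin W_ne] pxw_nonneg pmin_pos x d
    by (intro mult_left_mono) (auto simp: C_def Q_def)
  finally show ?thesis
    unfolding q_def C_def Q_def .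
qed

theorem theorem5:
  fixes N M d :: nat
    and W :: "'w set"
    and pw :: "'w \<Rightarrow> real"
    and pxw :: "'w \<Rightarrow> (nat \<Rightarrow> nat) \<Rightarrow> real"
    and P :: "'w \<Rightarrow> (nat \<Rightarrow> nat) \<Rightarrow> (nat \<Rightarrow> nat) \<Rightarrow> real"
  assumes N: "N \<ge> 2" and M: "M \<ge> 2" and d: "d \<ge> 2"
    and W_fin: "finite W" and W_ne: "W \<noteq> {}"
    and pw_nonneg: "\<forall>w\<in>W. pw w \<ge> 0"
    and pw_sum: "(\<Sum>w\<in>W. pw w) = 1"
    and pxw_nonneg: "\<forall>w\<in>W. \<forall>x\<in>settings_space N M. pxw w x \<ge> 0"
    and pxw_sum: "\<forall>w\<in>W. (\<Sum>x\<in>settings_space N M. pxw w x) = 1"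
    and px_equal: "\<forall>x\<in>settings_space N M. \<forall>y\<in>settings_space N M. p_x W pw pxw x = p_x W pw pxw y"
    and P_nonneg: "\<forall>w\<in>W. \<forall>x\<in>settings_space N M. \<forall>a\<in>outcomes_space N d. P w x a \<ge> 0"
    and P_sum: "\<forall>w\<in>W. \<forall>x\<in>settings_space N M. (\<Sum>a\<in>outcomes_space N d. P w x a) = 1"
    and P_ns: "\<forall>w\<in>W. nonsignalling N M d (P w)"
    and pmin_pos: "\<forall>w\<in>W. p_tilde_min N M pxw w > 0"
  shows "\<forall>k\<in>{1..N}. \<forall>x\<in>settings_space N M.
    (1/2) * (\<Sum>b<d. \<Sum>w\<in>W.
        \<bar>p_w_given_x W pw pxw w x * marginal N d (P w) x k b - (1 / real d) * p_w_given_x W pw pxw w x\<bar>)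
    \<le> ((real (d - 1))^2 + 1) / (2 * real d) * Q_tilde N M W pxw x * bell_I N M d (observed W pw pxw P)"
proof (intro ballI)
  fix k x assume k: "k \<in> {1..N}" and x: "x \<in> settings_space N M"
  let ?QI = "Q_tilde N M W pxw x * bell_I N M d (observed W pw pxw P)"
  have QI: "?QI \<ge> 0"
    using Q_tilde_nonneg[OF W_fin W_ne] bell_I_nonneg[OF _ _ observed_nonneg[OF pw_nonneg pxw_nonneg P_nonneg]]
      pxw_nonneg pmin_pos x M d by simp
  have "(1/2) * (\<Sum>b<d. \<Sum>w\<in>W. \<bar>p_w_given_x W pw pxw w x * marginal N d (P w) x k b
      - (1 / real d) * p_w_given_x W pw pxw w x\<bar>) \<le> (real d - 1) / real d * ?QI"
    using half_sum_abs_joint_le_bell_I_observed[OF N _ _ W_fin W_ne pw_nonneg pw_sum pxw_nonneg pxw_sum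
        px_equal P_nonneg P_sum P_ns pmin_pos k x] M d
    by (simp add: mult.assoc)
  also have "\<dots> \<le> ((real (d - 1))^2 + 1) / (2 * real d) * ?QI"
    using frac_pred_le_frac_sq_plus_one[of d] d QI by (intro mult_right_mono) simp_all
  finally show "(1/2) * (\<Sum>b<d. \<Sum>w\<in>W. \<bar>p_w_given_x W pw pxw w x * marginal N d (P w) x k b
      - (1 / real d) * p_w_given_x W pw pxw w x\<bar>)
    \<le> ((real (d - 1))^2 + 1) / (2 * real d) * Q_tilde N M W pxw x * bell_I N M d (observed W pw pxw P)"
    by (simp only: mult.assoc)
qed

end
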